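(* Let $U,V$ be nonempty finite words over the alphabet $\{-1,1\}$ and let $W=w_1\cdots w_\ell$ ($\ell\ge1$) be a word over the two-letter alphabet $\{U,V\}$; let $X=w_\ell\cdots w_1$ be the reversed word over $\{U,V\}$. Let $\widetilde W,\widetilde X\in\{-1,1\}^N$ be the words over $\{-1,1\}$ obtained by concatenating the words $U,V$ as they appear in $W$, resp. $X$, where $N=|W|_U|U|+|W|_V|V|$, and regard them as elements of $G_F$, $F=\mathbb Z/N\mathbb Z$. Then $A_F(\widetilde X)=A_F(\widetilde W)$.
   Context: $|W|_U$ denotes the number of occurrences of the letter $U$ in $W$, and $|U|$ the length of $U$. A word $v_1\cdots v_N$ over $\{-1,1\}$ is identified with $\sigma\in G_F=\{-1,1\}^{\mathbb Z/N\mathbb Z}$ by $\sigma_i=v_i$ (indices mod $N$). The correlation map is $A_F(\sigma)_f=\sum_{m\in F}\sigma_m\sigma_{m+f}$. *)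

theory Defs
  imports Main
begin

datatype letter = LU | LV

definition pm_word :: "int list \<Rightarrow> bool" where
  "pm_word s \<longleftrightarrow> set s \<subseteq> {-1, 1}"

definition subst_word :: "int list \<Rightarrow> int list \<Rightarrow> letter list \<Rightarrow> int list" where
  "subst_word U V W = concat (map (\<lambda>c. case c of LU \<Rightarrow> U | LV \<Rightarrow> V) W)"

text \<open>Periodic correlation A_F(sigma)_f = sum over m in Z/NZ of sigma_m sigma_(m+f),
  with N = length s and indices taken mod N (positions 0..N-1 correspond to v_1..v_N).\<close>
definition corr :: "int list \<Rightarrow> nat \<Rightarrow> int" where
  "corr s f = (\<Sum>m<length s. s ! m * s ! ((m + f) mod length s))"

end

theory Submission
  imports Defs
begin

text \<open>Cut the word into its blocks \<open>U\<close>/\<open>V\<close>. The correlation is a double sum, over pairs of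
  blocks, of a quantity depending only on the two blocks and the difference of their starting
  positions, periodic in that difference. Reversing the block order replaces the difference
  \<open>start(i) - start(k)\<close> by \<open>start(k+1) - start(i+1)\<close>. For two blocks of the same letter this is
  a relabelling of the pair. For a \<open>U\<close>-block and a \<open>V\<close>-block, both sums become sums of
  \<open>[w\<^sub>i = U] [w\<^sub>k = V] H(start(i+1) - start(k))\<close> with \<open>i, k\<close> in either order, and their difference is
  \<open>\<Sigma>\<^sub>k \<Sigma>\<^sub>i ([w\<^sub>i = U] - [w\<^sub>k = U]) H(start(i+1) - start(k))\<close>. Writing \<open>i = k + j\<close> cyclically, the
  argument of \<open>H\<close> is the length of the window of blocks \<open>k, \<dots>, k+j\<close>, a function of its number
  of \<open>U\<close>'s; as a function of \<open>k\<close> the summand is then a difference \<open>\<Phi>(c\<^sub>k\<^sub>+\<^sub>1) - \<Phi>(c\<^sub>k)\<close> of the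
  \<open>U\<close>-counts \<open>c\<^sub>k\<close> of the windows \<open>k, \<dots>, k+j-1\<close>, and the sum over \<open>k\<close> telescopes to zero.\<close>

lemma sum_lessThan_add:
  fixes g :: "nat \<Rightarrow> 'a::comm_monoid_add"
  shows "(\<Sum>p<m + n. g p) = (\<Sum>p<m. g p) + (\<Sum>p<n. g (m + p))"
  by (induction n) (simp_all add: add.assoc)

lemma sum_lessThan_periodic_shift:
  fixes g :: "nat \<Rightarrow> 'a::ab_group_add"
  assumes per: "\<And>t. g (t + n) = g t"
  shows "(\<Sum>i<n. g (k + i)) = (\<Sum>i<n. g i)"
proof (induction k)
  case (Suc k)
  have "(\<Sum>i<n. g (Suc k + i)) + g k = (\<Sum>i<n. g (k + i)) + g (k + n)"
    using sum.lessThan_Suc_shift[of "\<lambda>i. g (k + i)" n] by (simp add: add.commute)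
  then show ?case using Suc per[of k] by (simp add: add.commute)
qed simp

lemma sum_nested_swap3:
  fixes F :: "'a \<Rightarrow> 'b \<Rightarrow> 'c \<Rightarrow> 'd::comm_monoid_add"
  shows "(\<Sum>i\<in>I. \<Sum>k\<in>K. \<Sum>q\<in>Q. F i k q) = (\<Sum>q\<in>Q. \<Sum>i\<in>I. \<Sum>k\<in>K. F i k q)"
proof -
  have "(\<Sum>i\<in>I. \<Sum>k\<in>K. \<Sum>q\<in>Q. F i k q) = (\<Sum>i\<in>I. \<Sum>q\<in>Q. \<Sum>k\<in>K. F i k q)"
    by (intro sum.cong refl sum.swap)
  also have "\<dots> = (\<Sum>q\<in>Q. \<Sum>i\<in>I. \<Sum>k\<in>K. F i k q)"
    by (rule sum.swap)
  finally show ?thesis .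
qed

definition window_count :: "(nat \<Rightarrow> bool) \<Rightarrow> nat \<Rightarrow> nat \<Rightarrow> nat" where
  "window_count P k m = (\<Sum>l<m. of_bool (P (k + l)))"

lemma window_count_0 [simp]: "window_count P k 0 = 0"
  by (simp add: window_count_def)

lemma window_count_Suc: "window_count P k (Suc m) = window_count P k m + of_bool (P (k + m))"
  by (simp add: window_count_def)

lemma window_count_Suc_start: "window_count P k (Suc m) = of_bool (P k) + window_count P (Suc k) m"
  unfolding window_count_def by (subst sum.lessThan_Suc_shift) simp

lemma window_sum_eq_count:
  "(\<Sum>l<m. if P (k + l) then \<alpha> else \<beta>) = \<alpha> * int (window_count P k m) + \<beta> * (int m - int (window_count P k m))"
  by (induction m) (auto simp: window_count_Suc algebra_simps)

lemma sum_window_telescope: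
  fixes F :: "nat \<Rightarrow> int"
  assumes per: "\<And>t. P (t + n) = P t"
  shows "(\<Sum>k<n. (of_bool (P (k + j)) - of_bool (P k)) * F (window_count P k (Suc j))) = 0"
proof -
  define \<Phi> where "\<Phi> t = (\<Sum>q<t. F (Suc q))" for t
  have step: "(of_bool (P (k + j)) - of_bool (P k)) * F (window_count P k (Suc j))
      = \<Phi> (window_count P (Suc k) j) - \<Phi> (window_count P k j)" for k
    using window_count_Suc[of P k j] window_count_Suc_start[of P k j]
    by (cases "P k"; cases "P (k + j)") (auto simp: \<Phi>_def dest!: sym[of "Suc _"])
  have "window_count P n j = window_count P 0 j"
    unfolding window_count_def using per by (simp add: add.commute)
  then show ?thesis
    using sum_lessThan_telescope[of "\<lambda>k. \<Phi> (window_count P k j)" n] by (simp only: step)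
qed

lemma periodic_balance:
  fixes P :: "nat \<Rightarrow> bool" and H :: "int \<Rightarrow> int" and \<alpha> \<beta> :: int
  defines "s \<equiv> \<lambda>t. \<Sum>l<t. if P l then \<alpha> else \<beta>"
  assumes per: "\<And>t. P (t + n) = P t" and H_per: "\<And>x. H (x + s n) = H x"
  shows "(\<Sum>k<n. \<Sum>i<n. (of_bool (P i) - of_bool (P k)) * H (s (Suc i) - s k)) = 0"
proof -
  have s_shift: "s (t + n) = s t + s n" for t
    by (induction t) (simp_all add: s_def per)
  have s_window: "s (k + m) - s k = (\<Sum>l<m. if P (k + l) then \<alpha> else \<beta>)" for k m
    by (induction m) (simp_all add: s_def)
  define F where "F j c = H (\<alpha> * int c + \<beta> * (int (Suc j) - int c))" for j c
  have H_window: "H (s (Suc (k + j)) - s k) = F j (window_count P k (Suc j))" for k j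
    using s_window[of k "Suc j"] by (simp add: F_def window_sum_eq_count)
  have rotate: "(\<Sum>i<n. (of_bool (P i) - of_bool (P k)) * H (s (Suc i) - s k))
      = (\<Sum>j<n. (of_bool (P (k + j)) - of_bool (P k)) * F j (window_count P k (Suc j)))" for k
  proof -
    have "(\<Sum>i<n. (of_bool (P i) - of_bool (P k)) * H (s (Suc i) - s k))
        = (\<Sum>j<n. (of_bool (P (k + j)) - of_bool (P k)) * H (s (Suc (k + j)) - s k))"
    proof (rule sum_lessThan_periodic_shift[symmetric])
      fix t
      have "s (Suc (t + n)) - s k = (s (Suc t) - s k) + s n"
        using s_shift[of "Suc t"] by simp
      then have "H (s (Suc (t + n)) - s k) = H (s (Suc t) - s k)"
        by (simp only: H_per)
      then show "(of_bool (P (t + n)) - of_bool (P k)) * H (s (Suc (t + n)) - s k)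
          = (of_bool (P t) - of_bool (P k)) * H (s (Suc t) - s k)"
        by (simp add: per)
    qed
    also have "\<dots> = (\<Sum>j<n. (of_bool (P (k + j)) - of_bool (P k)) * F j (window_count P k (Suc j)))"
      by (simp only: H_window)
    finally show ?thesis .
  qed
  have "(\<Sum>k<n. \<Sum>i<n. (of_bool (P i) - of_bool (P k)) * H (s (Suc i) - s k))
      = (\<Sum>k<n. \<Sum>j<n. (of_bool (P (k + j)) - of_bool (P k)) * F j (window_count P k (Suc j)))"
    by (simp only: rotate)
  also have "\<dots> = (\<Sum>j<n. \<Sum>k<n. (of_bool (P (k + j)) - of_bool (P k)) * F j (window_count P k (Suc j)))"
    by (rule sum.swap)
  also have "\<dots> = 0"
    by (simp add: sum_window_telescope per)
  finally show ?thesis .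
qed

definition block_offset :: "'a list list \<Rightarrow> nat \<Rightarrow> nat" where
  "block_offset xs i = length (concat (take i xs))"

lemma block_offset_0 [simp]: "block_offset xs 0 = 0"
  by (simp add: block_offset_def)

lemma block_offset_Suc:
  "i < length xs \<Longrightarrow> block_offset xs (Suc i) = block_offset xs i + length (xs ! i)"
  by (simp add: block_offset_def take_Suc_conv_app_nth)

lemma int_block_offset_eq_sum:
  "i \<le> length xs \<Longrightarrow> int (block_offset xs i) = (\<Sum>l<i. int (length (xs ! l)))"
  by (induction i) (simp_all add: block_offset_Suc)

lemma block_offset_rev:
  "int (block_offset (rev xs) i) = int (length (concat xs)) - int (block_offset xs (length xs - i))"
proof -
  have "length (concat xs) = block_offset xs (length xs - i) + length (concat (drop (length xs - i) xs))"
    unfolding block_offset_def by (metis append_take_drop_id concat_append length_append)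
  then show ?thesis
    by (simp add: block_offset_def take_rev)
qed

lemma sum_concat_blocks:
  fixes g :: "nat \<Rightarrow> 'b::comm_monoid_add"
  shows "(\<Sum>p<length (concat xs). g p) = (\<Sum>i<length xs. \<Sum>x<length (xs ! i). g (block_offset xs i + x))"
proof (induction xs arbitrary: g)
  case (Cons a xs)
  have "(\<Sum>p<length (concat (a # xs)). g p) = (\<Sum>p<length a. g p) + (\<Sum>p<length (concat xs). g (length a + p))"
    by (simp add: sum_lessThan_add)
  then show ?case
    by (simp add: Cons.IH sum.lessThan_Suc_shift block_offset_def add.assoc del: sum.lessThan_Suc)
qed simp

lemma nth_concat_block_offset:
  assumes "i < length xs" and "x < length (xs ! i)"
  shows "concat xs ! (block_offset xs i + x) = xs ! i ! x"
proof -
  have "concat xs = concat (take i xs) @ xs ! i @ concat (drop (Suc i) xs)"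
    using assms(1) by (metis append_take_drop_id concat.simps(2) concat_append Cons_nth_drop_Suc)
  then show ?thesis
    using assms(2) by (simp add: block_offset_def nth_append)
qed

lemma corr_eq_dvd_sum:
  assumes "s \<noteq> []"
  shows "corr s f = (\<Sum>p<length s. \<Sum>q<length s. s ! p * s ! q * of_bool (int (length s) dvd int p + int f - int q))"
proof -
  let ?N = "length s"
  have dvd_iff: "int ?N dvd int p + int f - int q \<longleftrightarrow> q = (p + f) mod ?N" if "q < ?N" for p q
  proof -
    have "int ?N dvd int p + int f - int q \<longleftrightarrow> int (p + f) mod int ?N = int q mod int ?N"
      by (simp add: mod_eq_dvd_iff)
    also have "\<dots> \<longleftrightarrow> q = (p + f) mod ?N"
      using that by (metis mod_less of_nat_eq_iff zmod_int)
    finally show ?thesis .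
  qed
  have inner: "(\<Sum>q<?N. s ! p * s ! q * of_bool (int ?N dvd int p + int f - int q))
      = s ! p * s ! ((p + f) mod ?N)" for p
  proof -
    have "(\<Sum>q<?N. s ! p * s ! q * of_bool (int ?N dvd int p + int f - int q))
        = (\<Sum>q<?N. if q = (p + f) mod ?N then s ! p * s ! q else 0)"
      using dvd_iff by (intro sum.cong) auto
    also have "\<dots> = s ! p * s ! ((p + f) mod ?N)"
      using assms by simp
    finally show ?thesis .
  qed
  show ?thesis
    unfolding corr_def by (simp only: inner)
qed

text \<open>The contribution to \<open>corr _ f\<close> of a block \<open>u\<close> starting at position \<open>p\<close> and a block \<open>v\<close>
  starting at position \<open>q\<close> of a word of length \<open>N\<close>, where \<open>r = p - q\<close>.\<close>
definition block_corr :: "nat \<Rightarrow> nat \<Rightarrow> int list \<Rightarrow> int list \<Rightarrow> int \<Rightarrow> int" where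
  "block_corr N f u v r =
     (\<Sum>x<length u. \<Sum>y<length v. u ! x * v ! y * of_bool (int N dvd r + int x + int f - int y))"

lemma block_corr_periodic: "block_corr N f u v (r + int N) = block_corr N f u v r"
proof -
  have "int N dvd r + int N + int x + int f - int y \<longleftrightarrow> int N dvd r + int x + int f - int y" for x y
  proof -
    have "r + int N + int x + int f - int y = (r + int x + int f - int y) + int N"
      by simp
    then show ?thesis
      by (simp only: dvd_add_left_iff dvd_refl)
  qed
  then show ?thesis
    by (simp add: block_corr_def)
qed

lemma corr_concat:
  assumes "concat xs \<noteq> []"
  shows "corr (concat xs) f = (\<Sum>i<length xs. \<Sum>k<length xs. block_corr (length (concat xs)) f (xs ! i) (xs ! k)
           (int (block_offset xs i) - int (block_offset xs k)))"
proof -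
  let ?N = "length (concat xs)" and ?off = "block_offset xs"
  define F where "F p q = concat xs ! p * concat xs ! q * of_bool (int ?N dvd int p + int f - int q)" for p q
  have "corr (concat xs) f = (\<Sum>p<?N. \<Sum>q<?N. F p q)"
    unfolding F_def by (rule corr_eq_dvd_sum[OF assms])
  also have "\<dots> = (\<Sum>i<length xs. \<Sum>x<length (xs ! i). \<Sum>k<length xs. \<Sum>y<length (xs ! k).
      F (?off i + x) (?off k + y))"
    by (simp only: sum_concat_blocks[where xs=xs])
  also have "\<dots> = (\<Sum>i<length xs. \<Sum>k<length xs. \<Sum>x<length (xs ! i). \<Sum>y<length (xs ! k).
      F (?off i + x) (?off k + y))"
    by (intro sum.cong refl sum.swap)
  also have "\<dots> = (\<Sum>i<length xs. \<Sum>k<length xs. block_corr ?N f (xs ! i) (xs ! k) (int (?off i) - int (?off k)))"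
    unfolding block_corr_def F_def
    by (intro sum.cong refl) (simp add: nth_concat_block_offset; simp add: algebra_simps)
  finally show ?thesis .
qed

lemma corr_concat_rev:
  assumes "concat xs \<noteq> []"
  shows "corr (concat (rev xs)) f = (\<Sum>i<length xs. \<Sum>k<length xs. block_corr (length (concat xs)) f (xs ! i) (xs ! k)
           (int (block_offset xs (Suc k)) - int (block_offset xs (Suc i))))"
proof -
  let ?n = "length xs" and ?N = "length (concat xs)"
  have "corr (concat (rev xs)) f = (\<Sum>i<?n. \<Sum>k<?n. block_corr ?N f (rev xs ! i) (rev xs ! k)
      (int (block_offset (rev xs) i) - int (block_offset (rev xs) k)))"
    using corr_concat[of "rev xs" f] assms by simp
  also have "\<dots> = (\<Sum>i<?n. \<Sum>k<?n. block_corr ?N f (xs ! (?n - Suc i)) (xs ! (?n - Suc k))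
      (int (block_offset xs (Suc (?n - Suc k))) - int (block_offset xs (Suc (?n - Suc i)))))"
    by (intro sum.cong refl) (simp add: rev_nth block_offset_rev Suc_diff_Suc)
  also have "\<dots> = (\<Sum>i<?n. \<Sum>k<?n. block_corr ?N f (xs ! (?n - Suc i)) (xs ! k)
      (int (block_offset xs (Suc k)) - int (block_offset xs (Suc (?n - Suc i)))))"
    by (intro sum.cong refl sum.nat_diff_reindex)
  also have "\<dots> = (\<Sum>i<?n. \<Sum>k<?n. block_corr ?N f (xs ! i) (xs ! k)
      (int (block_offset xs (Suc k)) - int (block_offset xs (Suc i))))"
    by (rule sum.nat_diff_reindex)
  finally show ?thesis .
qed

lemma sum_block_pairs_shift_diagonal:
  fixes G :: "int \<Rightarrow> int"
  shows "(\<Sum>i<length xs. \<Sum>k<length xs. of_bool (xs ! i = a \<and> xs ! k = a)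
            * G (int (block_offset xs (Suc k)) - int (block_offset xs (Suc i))))
       = (\<Sum>i<length xs. \<Sum>k<length xs. of_bool (xs ! i = a \<and> xs ! k = a)
            * G (int (block_offset xs i) - int (block_offset xs k)))"
proof -
  have "(\<Sum>i<length xs. \<Sum>k<length xs. of_bool (xs ! i = a \<and> xs ! k = a)
            * G (int (block_offset xs (Suc k)) - int (block_offset xs (Suc i))))
      = (\<Sum>i<length xs. \<Sum>k<length xs. of_bool (xs ! k = a \<and> xs ! i = a)
            * G (int (block_offset xs k) - int (block_offset xs i)))"
    by (intro sum.cong refl) (auto simp: block_offset_Suc)
  also have "\<dots> = (\<Sum>k<length xs. \<Sum>i<length xs. of_bool (xs ! k = a \<and> xs ! i = a)
            * G (int (block_offset xs k) - int (block_offset xs i)))"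
    by (rule sum.swap)
  finally show ?thesis .
qed

lemma sum_block_pairs_shift_two_blocks:
  fixes G :: "int \<Rightarrow> int"
  assumes blocks: "set xs \<subseteq> {a, b}" and "a \<noteq> b"
    and G_per: "\<And>r. G (r + int (length (concat xs))) = G r"
  shows "(\<Sum>i<length xs. \<Sum>k<length xs. of_bool (xs ! i = a \<and> xs ! k = b)
            * G (int (block_offset xs (Suc k)) - int (block_offset xs (Suc i))))
       = (\<Sum>i<length xs. \<Sum>k<length xs. of_bool (xs ! i = a \<and> xs ! k = b)
            * G (int (block_offset xs i) - int (block_offset xs k)))"
    (is "?lhs = ?rhs")
proof -
  let ?n = "length xs" and ?off = "\<lambda>i. int (block_offset xs i)"
  define P where "P t \<longleftrightarrow> xs ! (t mod ?n) = a" for t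
  define s where "s t = (\<Sum>l<t. if P l then int (length a) else int (length b))" for t
  define H where "H x = G (x - int (length a))" for x
  define p where "p i = (of_bool (P i) :: int)" for i
  have xs_nth: "xs ! i = a \<longleftrightarrow> P i" "xs ! i \<noteq> a \<longleftrightarrow> xs ! i = b" if "i < ?n" for i
  proof -
    have "xs ! i \<in> {a, b}"
      using blocks nth_mem[OF that] by blast
    then show "xs ! i = a \<longleftrightarrow> P i" "xs ! i \<noteq> a \<longleftrightarrow> xs ! i = b"
      using that \<open>a \<noteq> b\<close> by (auto simp: P_def)
  qed
  have s_off: "s t = ?off t" if "t \<le> ?n" for t
    unfolding s_def int_block_offset_eq_sum[OF that]
  proof (intro sum.cong refl)
    fix l assume "l \<in> {..<t}"
    then have "l < ?n" using that by simp
    then show "(if P l then int (length a) else int (length b)) = int (length (xs ! l))"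
      using xs_nth[of l] by (cases "P l") auto
  qed
  have rhs_term: "of_bool (xs ! i = a \<and> xs ! k = b) * G (?off i - ?off k) = p i * (1 - p k) * H (s (Suc i) - s k)"
    and lhs_term: "of_bool (xs ! i = a \<and> xs ! k = b) * G (?off (Suc k) - ?off (Suc i))
                   = p i * (1 - p k) * H (s (Suc k) - s i)"
    if "i < ?n" "k < ?n" for i k
    using that xs_nth[OF that(1)] xs_nth[OF that(2)]
    by (auto simp: p_def H_def s_off block_offset_Suc diff_diff_eq)
  have balance: "(\<Sum>k<?n. \<Sum>i<?n. (p i - p k) * H (s (Suc i) - s k)) = 0"
  proof -
    have P_per: "P (t + ?n) = P t" for t
      by (simp add: P_def)
    have H_per: "H (x + s ?n) = H x" for x
      using G_per[of "x - int (length a)"] s_off[of ?n] by (simp add: H_def block_offset_def algebra_simps)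
    show ?thesis
      using periodic_balance[of P ?n H, OF P_per H_per[unfolded s_def]]
      by (simp only: s_def[symmetric] p_def)
  qed
  have "?rhs = (\<Sum>i<?n. \<Sum>k<?n. p i * (1 - p k) * H (s (Suc i) - s k))"
    by (intro sum.cong refl) (simp add: rhs_term)
  also have "\<dots> = (\<Sum>k<?n. \<Sum>i<?n. p i * (1 - p k) * H (s (Suc i) - s k))"
    by (rule sum.swap)
  finally have rhs: "?rhs = \<dots>" .
  have lhs: "?lhs = (\<Sum>k<?n. \<Sum>i<?n. p k * (1 - p i) * H (s (Suc i) - s k))"
    by (intro sum.cong refl) (simp add: lhs_term)
  have "?rhs - ?lhs = (\<Sum>k<?n. \<Sum>i<?n. (p i - p k) * H (s (Suc i) - s k))"
    unfolding rhs lhs sum_subtractf[symmetric] by (intro sum.cong refl) (simp add: algebra_simps)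
  then show ?thesis
    using balance by simp
qed

lemma sum_block_pairs_shift:
  fixes G :: "'a list \<Rightarrow> 'a list \<Rightarrow> int \<Rightarrow> int"
  assumes blocks: "set xs \<subseteq> {u, v}"
    and G_per: "\<And>a b r. G a b (r + int (length (concat xs))) = G a b r"
  shows "(\<Sum>i<length xs. \<Sum>k<length xs.
            G (xs ! i) (xs ! k) (int (block_offset xs (Suc k)) - int (block_offset xs (Suc i))))
       = (\<Sum>i<length xs. \<Sum>k<length xs.
            G (xs ! i) (xs ! k) (int (block_offset xs i) - int (block_offset xs k)))"
proof -
  let ?n = "length xs" and ?off = "\<lambda>i. int (block_offset xs i)" and ?B = "{u, v} \<times> {u, v}"
  have split: "G (xs ! i) (xs ! k) r = (\<Sum>(a, b)\<in>?B. of_bool (xs ! i = a \<and> xs ! k = b) * G a b r)"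
    if "i < ?n" "k < ?n" for i k r
  proof -
    have "(xs ! i, xs ! k) \<in> ?B"
      using blocks nth_mem[OF that(1)] nth_mem[OF that(2)] by blast
    moreover have "(\<Sum>(a, b)\<in>?B. of_bool (xs ! i = a \<and> xs ! k = b) * G a b r)
        = (\<Sum>q\<in>?B. if (xs ! i, xs ! k) = q then G (fst q) (snd q) r else 0)"
      by (intro sum.cong) auto
    ultimately show ?thesis by simp
  qed
  have pair: "(\<Sum>i<?n. \<Sum>k<?n. of_bool (xs ! i = a \<and> xs ! k = b) * G a b (?off (Suc k) - ?off (Suc i)))
      = (\<Sum>i<?n. \<Sum>k<?n. of_bool (xs ! i = a \<and> xs ! k = b) * G a b (?off i - ?off k))"
    if "(a, b) \<in> ?B" for a b
  proof (cases "a = b")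
    case True
    then show ?thesis by (simp only: sum_block_pairs_shift_diagonal)
  next
    case False
    with that have "set xs \<subseteq> {a, b}" using blocks by auto
    then show ?thesis
      using False G_per by (rule sum_block_pairs_shift_two_blocks)
  qed
  have "(\<Sum>i<?n. \<Sum>k<?n. G (xs ! i) (xs ! k) (?off (Suc k) - ?off (Suc i)))
      = (\<Sum>i<?n. \<Sum>k<?n. \<Sum>(a, b)\<in>?B. of_bool (xs ! i = a \<and> xs ! k = b) * G a b (?off (Suc k) - ?off (Suc i)))"
    by (intro sum.cong refl) (simp add: split)
  also have "\<dots> = (\<Sum>(a, b)\<in>?B. \<Sum>i<?n. \<Sum>k<?n. of_bool (xs ! i = a \<and> xs ! k = b) * G a b (?off (Suc k) - ?off (Suc i)))"
    unfolding case_prod_unfold by (rule sum_nested_swap3)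
  also have "\<dots> = (\<Sum>(a, b)\<in>?B. \<Sum>i<?n. \<Sum>k<?n. of_bool (xs ! i = a \<and> xs ! k = b) * G a b (?off i - ?off k))"
    using pair by (intro sum.cong refl) auto
  also have "\<dots> = (\<Sum>i<?n. \<Sum>k<?n. \<Sum>(a, b)\<in>?B. of_bool (xs ! i = a \<and> xs ! k = b) * G a b (?off i - ?off k))"
    unfolding case_prod_unfold by (rule sum_nested_swap3[symmetric])
  also have "\<dots> = (\<Sum>i<?n. \<Sum>k<?n. G (xs ! i) (xs ! k) (?off i - ?off k))"
    by (intro sum.cong refl) (simp add: split)
  finally show ?thesis .
qed

theorem corr_concat_rev_two_blocks:
  assumes "set xs \<subseteq> {u, v}"
  shows "corr (concat (rev xs)) f = corr (concat xs) f"
proof (cases "concat xs = []")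
  case True
  moreover have "concat (rev xs) = []"
    using True by (metis length_0_conv length_concat_rev)
  ultimately show ?thesis
    by (simp only:)
next
  case False
  show ?thesis
    unfolding corr_concat_rev[OF False] corr_concat[OF False]
    using assms block_corr_periodic by (rule sum_block_pairs_shift)
qed

theorem mainTheorem8:
  fixes U V :: "int list" and W :: "letter list"
  assumes "pm_word U" and "pm_word V"
    and "U \<noteq> []" and "V \<noteq> []"
    and "W \<noteq> []"
  shows "length (subst_word U V (rev W)) = length (subst_word U V W)
    \<and> (\<forall>f < length (subst_word U V W).
         corr (subst_word U V (rev W)) f = corr (subst_word U V W) f)"
proof -
  define xs where "xs = map (\<lambda>c. case c of LU \<Rightarrow> U | LV \<Rightarrow> V) W"
  have W_blocks: "subst_word U V W = concat xs" and rev_W_blocks: "subst_word U V (rev W) = concat (rev xs)"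
    by (simp_all add: subst_word_def xs_def rev_map)
  have "set xs \<subseteq> {U, V}"
    by (auto simp: xs_def split: letter.splits)
  then show ?thesis
    unfolding W_blocks rev_W_blocks by (simp add: corr_concat_rev_two_blocks)
qed

end
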